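(* Let $F\in\mathbb{Z}[x_0,\ldots,x_n]$ be a form with $\mathrm{o}(F)<n+1$. Then for all except finitely many primes $p$, $\mathrm{o}(F_p)<n+1$.
   Context: $F_p$ denotes the reduction of $F$ modulo $p$. The order of a form over a field $K$ is the smallest integer $m$ such that the form is equivalent, via an invertible linear change of variables over $K$, to a form explicitly involving only $m$ variables; $\mathrm{o}(F)$ is the order over $\mathbb{Q}$ and $\mathrm{o}(F_p)$ the order over $\mathbb{F}_p$. *)

theory Defs
  imports Complex_Main "HOL-Library.Poly_Mapping" "HOL-Computational_Algebra.Primes"
begin

text \<open>Multivariate polynomials in the variables x_0, x_1, ... with coefficients in 'a:
  finitely supported maps from exponent vectors (monomials) to coefficients.\<close>
type_synonym 'a mpoly = "(nat \<Rightarrow>\<^sub>0 nat) \<Rightarrow>\<^sub>0 'a"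

definition mvars :: "'a::zero mpoly \<Rightarrow> nat set" where
  "mvars P = \<Union> (Poly_Mapping.keys ` Poly_Mapping.keys P)"

definition mconst :: "'a::zero \<Rightarrow> 'a mpoly" where
  "mconst c = Poly_Mapping.single 0 c"

definition mvar :: "nat \<Rightarrow> 'a::{zero,one} mpoly" where
  "mvar i = Poly_Mapping.single (Poly_Mapping.single i 1) 1"

definition msubst :: "(nat \<Rightarrow> 'a::comm_semiring_1 mpoly) \<Rightarrow> 'a mpoly \<Rightarrow> 'a mpoly" where
  "msubst \<sigma> P = (\<Sum>m\<in>Poly_Mapping.keys P. mconst (Poly_Mapping.lookup P m) * (\<Prod>i\<in>Poly_Mapping.keys m. \<sigma> i ^ Poly_Mapping.lookup m i))"

definition is_form :: "nat \<Rightarrow> 'a::zero mpoly \<Rightarrow> bool" where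
  "is_form n F \<longleftrightarrow> mvars F \<subseteq> {..n} \<and>
     (\<exists>d. \<forall>m\<in>Poly_Mapping.keys F. (\<Sum>i\<in>Poly_Mapping.keys m. Poly_Mapping.lookup m i) = d)"

definition lin_change :: "nat \<Rightarrow> (nat \<Rightarrow> nat \<Rightarrow> 'a::comm_semiring_1) \<Rightarrow> nat \<Rightarrow> 'a mpoly" where
  "lin_change n A = (\<lambda>i. \<Sum>j\<le>n. mconst (A i j) * mvar j)"

definition invertible_mat :: "nat \<Rightarrow> (nat \<Rightarrow> nat \<Rightarrow> 'a::field) \<Rightarrow> bool" where
  "invertible_mat n A \<longleftrightarrow> (\<exists>B. \<forall>i\<le>n. \<forall>k\<le>n.
      (\<Sum>j\<le>n. A i j * B j k) = (if i = k then 1 else 0) \<and>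
      (\<Sum>j\<le>n. B i j * A j k) = (if i = k then 1 else 0))"

definition order_field :: "nat \<Rightarrow> 'a::field mpoly \<Rightarrow> nat" where
  "order_field n F = (LEAST m. \<exists>A. invertible_mat n A \<and>
       card (mvars (msubst (lin_change n A) F)) \<le> m)"

definition reduce_mod :: "int \<Rightarrow> int mpoly \<Rightarrow> int mpoly" where
  "reduce_mod p P = Poly_Mapping.map (\<lambda>c. c mod p) P"

definition invertible_mat_mod :: "int \<Rightarrow> nat \<Rightarrow> (nat \<Rightarrow> nat \<Rightarrow> int) \<Rightarrow> bool" where
  "invertible_mat_mod p n A \<longleftrightarrow> (\<exists>B. \<forall>i\<le>n. \<forall>k\<le>n.
      (\<Sum>j\<le>n. A i j * B j k) mod p = (if i = k then 1 else 0) mod p \<and>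
      (\<Sum>j\<le>n. B i j * A j k) mod p = (if i = k then 1 else 0) mod p)"

text \<open>Order of the reduction F_p over F_p (every matrix over F_p lifts to an integer
  matrix, and reduction mod p commutes with substitution).\<close>
definition order_mod :: "nat \<Rightarrow> nat \<Rightarrow> int mpoly \<Rightarrow> nat" where
  "order_mod p n F = (LEAST m. \<exists>A. invertible_mat_mod (int p) n A \<and>
       card (mvars (reduce_mod (int p) (msubst (lin_change n A) F))) \<le> m)"

end

theory Submission
  imports Defs "HOL-Number_Theory.Cong"
begin

text \<open>Take a rational invertible matrix \<open>A\<close> for which \<open>F(Ax)\<close> involves at most \<open>n\<close> variables,
  and scale it to an integer matrix \<open>A' = D A\<close>. As \<open>F\<close> is homogeneous of some degree \<open>d\<close>,
  \<open>F(A'x) = D\<^sup>d F(Ax)\<close> involves the same variables, and reducing it modulo \<open>p\<close> can only remove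
  variables. If \<open>E B\<close> is an integral multiple of the inverse \<open>B\<close> of \<open>A\<close>, then \<open>A' (E B) = D E I\<close>,
  so \<open>A'\<close> stays invertible modulo every prime not dividing \<open>D E\<close>.\<close>

lemma lookup_map_of_zero:
  "f 0 = 0 \<Longrightarrow> Poly_Mapping.lookup (Poly_Mapping.map f p) k = f (Poly_Mapping.lookup p k)"
  by transfer (auto simp: when_def)

lemma keys_map_subset: "Poly_Mapping.keys (Poly_Mapping.map f p) \<subseteq> Poly_Mapping.keys p"
  by transfer (auto simp: when_def)

lemma keys_map_eq:
  "(\<And>x. f x = 0 \<longleftrightarrow> x = 0) \<Longrightarrow> Poly_Mapping.keys (Poly_Mapping.map f p) = Poly_Mapping.keys p"
  by transfer (auto simp: when_def)

lemma sum_single_lookup: "(\<Sum>m\<in>Poly_Mapping.keys p. Poly_Mapping.single m (Poly_Mapping.lookup p m)) = p"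
proof -
  have lookup_sum_single: "finite I \<Longrightarrow>
      Poly_Mapping.lookup (\<Sum>i\<in>I. Poly_Mapping.single i (Poly_Mapping.lookup p i)) j =
      (if j \<in> I then Poly_Mapping.lookup p j else 0)" for I j
    by (induction I rule: finite_induct) (auto simp: lookup_single lookup_add when_def)
  show ?thesis
    by (rule poly_mapping_eqI) (fastforce simp add: in_keys_iff lookup_sum_single)
qed

lemma map_of_int_add:
  "(Poly_Mapping.map of_int (p + q) :: 'a \<Rightarrow>\<^sub>0 'b::ring_1) =
     Poly_Mapping.map of_int p + Poly_Mapping.map of_int q"
  by (rule poly_mapping_eqI) (simp add: lookup_map_of_zero lookup_add)

lemma map_of_int_sum:
  "(Poly_Mapping.map of_int (sum f I) :: 'a \<Rightarrow>\<^sub>0 'b::ring_1) = (\<Sum>i\<in>I. Poly_Mapping.map of_int (f i))"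
  by (induction I rule: infinite_finite_induct) (auto simp: map_of_int_add map_eq_zero_iff)

lemma map_of_int_mult:
  "(Poly_Mapping.map of_int (p * q) :: 'a::comm_monoid_add \<Rightarrow>\<^sub>0 'b::comm_ring_1) =
     Poly_Mapping.map of_int p * Poly_Mapping.map of_int q"
proof -
  let ?h = "Poly_Mapping.map of_int :: ('a \<Rightarrow>\<^sub>0 int) \<Rightarrow> ('a \<Rightarrow>\<^sub>0 'b)"
  let ?P = "\<Sum>m\<in>Poly_Mapping.keys p. Poly_Mapping.single m (Poly_Mapping.lookup p m)"
  let ?Q = "\<Sum>m\<in>Poly_Mapping.keys q. Poly_Mapping.single m (Poly_Mapping.lookup q m)"
  have "?h (?P * ?Q) = (\<Sum>m\<in>Poly_Mapping.keys p. \<Sum>m'\<in>Poly_Mapping.keys q.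
      ?h (Poly_Mapping.single (m + m') (Poly_Mapping.lookup p m * Poly_Mapping.lookup q m')))"
    by (simp add: sum_distrib_left sum_distrib_right map_of_int_sum mult_single) (rule sum.swap)
  also have "\<dots> = ?h ?P * ?h ?Q"
    by (simp add: sum_distrib_left sum_distrib_right map_of_int_sum mult_single) (rule sum.swap)
  finally show ?thesis
    by (simp only: sum_single_lookup)
qed

lemma map_of_int_one: "(Poly_Mapping.map of_int 1 :: 'a::zero \<Rightarrow>\<^sub>0 'b::ring_1) = 1"
proof -
  have "Poly_Mapping.map of_int (Poly_Mapping.single 0 1) = (Poly_Mapping.single 0 1 :: 'a \<Rightarrow>\<^sub>0 'b)"
    by (simp del: single_one)
  then show ?thesis
    by (simp only: single_one)
qed

lemma map_of_int_power:
  "(Poly_Mapping.map of_int (p ^ k) :: 'a::comm_monoid_add \<Rightarrow>\<^sub>0 'b::comm_ring_1) =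
     Poly_Mapping.map of_int p ^ k"
  by (induction k) (simp_all add: map_of_int_one map_of_int_mult)

lemma map_of_int_prod:
  "(Poly_Mapping.map of_int (prod f I) :: 'a::comm_monoid_add \<Rightarrow>\<^sub>0 'b::comm_ring_1) =
     (\<Prod>i\<in>I. Poly_Mapping.map of_int (f i))"
  by (induction I rule: infinite_finite_induct) (auto simp: map_of_int_one map_of_int_mult)

lemma finite_mvars: "finite (mvars P)"
  by (simp add: mvars_def)

lemma mvars_map_subset: "mvars (Poly_Mapping.map f P) \<subseteq> mvars P"
  unfolding mvars_def by (intro Union_mono image_mono keys_map_subset)

lemma mvars_map_of_int: "mvars (Poly_Mapping.map (of_int :: int \<Rightarrow> 'a::ring_char_0) P) = mvars P"
  unfolding mvars_def by (subst keys_map_eq) simp_all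

lemma card_mvars_reduce_mod_le: "card (mvars (reduce_mod p P)) \<le> card (mvars P)"
  unfolding reduce_mod_def by (intro card_mono finite_mvars mvars_map_subset)

lemma mconst_mult: "mconst (a * b) = (mconst a * mconst b :: 'a::comm_semiring_1 mpoly)"
  by (simp add: mconst_def mult_single)

lemma mconst_power: "mconst (a ^ k) = (mconst a ^ k :: 'a::comm_semiring_1 mpoly)"
  by (induction k) (simp_all add: mconst_mult mconst_def[of 1])

lemma mvars_mconst_mult:
  assumes "(c :: 'a::idom) \<noteq> 0"
  shows "mvars (mconst c * P) = mvars P"
proof -
  have "mconst c * P = Poly_Mapping.map ((*) c) P"
    by (simp add: mconst_def mult_map_scale_conv_mult)
  moreover have "Poly_Mapping.keys (Poly_Mapping.map ((*) c) P) = Poly_Mapping.keys P"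
    by (rule keys_map_eq) (simp add: assms)
  ultimately show ?thesis by (simp add: mvars_def)
qed

lemma map_of_int_mconst: "Poly_Mapping.map of_int (mconst c) = mconst (of_int c)"
  by (simp add: mconst_def)

lemma map_of_int_mvar: "Poly_Mapping.map of_int (mvar i) = mvar i"
  by (simp add: mvar_def)

lemma msubst_eq_sum_superset:
  assumes "finite S" and "Poly_Mapping.keys P \<subseteq> S"
  shows "msubst \<sigma> P = (\<Sum>m\<in>S. mconst (Poly_Mapping.lookup P m) *
           (\<Prod>i\<in>Poly_Mapping.keys m. \<sigma> i ^ Poly_Mapping.lookup m i))"
  unfolding msubst_def using assms
  by (intro sum.mono_neutral_left) (auto simp: mconst_def in_keys_iff)

lemma map_of_int_msubst:
  "(Poly_Mapping.map of_int (msubst \<sigma> P) :: 'a::comm_ring_1 mpoly) =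
     msubst (\<lambda>i. Poly_Mapping.map of_int (\<sigma> i)) (Poly_Mapping.map of_int P)"
proof -
  let ?\<tau> = "\<lambda>i. Poly_Mapping.map of_int (\<sigma> i) :: 'a mpoly"
  have "Poly_Mapping.map of_int (msubst \<sigma> P) = (\<Sum>m\<in>Poly_Mapping.keys P.
      mconst (Poly_Mapping.lookup (Poly_Mapping.map of_int P) m) *
      (\<Prod>i\<in>Poly_Mapping.keys m. ?\<tau> i ^ Poly_Mapping.lookup m i))"
    by (simp add: msubst_def map_of_int_sum map_of_int_mult map_of_int_prod map_of_int_power
        map_of_int_mconst lookup_map_of_zero)
  also have "\<dots> = msubst ?\<tau> (Poly_Mapping.map of_int P)"
    by (intro msubst_eq_sum_superset[symmetric] finite_keys keys_map_subset)
  finally show ?thesis .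
qed

lemma msubst_scale_homogeneous:
  assumes "\<forall>m\<in>Poly_Mapping.keys P. (\<Sum>i\<in>Poly_Mapping.keys m. Poly_Mapping.lookup m i) = d"
    and "\<And>m i. m \<in> Poly_Mapping.keys P \<Longrightarrow> i \<in> Poly_Mapping.keys m \<Longrightarrow> \<tau> i = mconst c * \<sigma> i"
  shows "msubst \<tau> P = mconst (c ^ d) * msubst (\<sigma> :: nat \<Rightarrow> 'a::comm_semiring_1 mpoly) P"
  unfolding msubst_def sum_distrib_left
proof (rule sum.cong[OF refl])
  fix m assume m: "m \<in> Poly_Mapping.keys P"
  have "(\<Prod>i\<in>Poly_Mapping.keys m. \<tau> i ^ Poly_Mapping.lookup m i)
     = (\<Prod>i\<in>Poly_Mapping.keys m. mconst c ^ Poly_Mapping.lookup m i * \<sigma> i ^ Poly_Mapping.lookup m i)"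
    using assms(2)[OF m] by (intro prod.cong) (simp_all add: power_mult_distrib)
  also have "\<dots> = mconst c ^ (\<Sum>i\<in>Poly_Mapping.keys m. Poly_Mapping.lookup m i) *
      (\<Prod>i\<in>Poly_Mapping.keys m. \<sigma> i ^ Poly_Mapping.lookup m i)"
    by (simp add: prod.distrib power_sum)
  also have "\<dots> = mconst (c ^ d) * (\<Prod>i\<in>Poly_Mapping.keys m. \<sigma> i ^ Poly_Mapping.lookup m i)"
    using assms(1) m by (simp add: mconst_power)
  finally show "mconst (Poly_Mapping.lookup P m) * (\<Prod>i\<in>Poly_Mapping.keys m. \<tau> i ^ Poly_Mapping.lookup m i) =
      mconst (c ^ d) * (mconst (Poly_Mapping.lookup P m) * (\<Prod>i\<in>Poly_Mapping.keys m. \<sigma> i ^ Poly_Mapping.lookup m i))"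
    by (simp add: ac_simps)
qed

lemma mvars_msubst_lin_change_integral_multiple:
  fixes A :: "nat \<Rightarrow> nat \<Rightarrow> 'a::{idom,ring_char_0}"
  assumes "is_form n F" and "D \<noteq> 0"
    and A': "\<And>i j. i \<le> n \<Longrightarrow> j \<le> n \<Longrightarrow> of_int (A' i j) = of_int D * A i j"
  shows "mvars (msubst (lin_change n A') F) = mvars (msubst (lin_change n A) (Poly_Mapping.map of_int F))"
proof -
  from assms(1) obtain d where vars: "mvars F \<subseteq> {..n}"
    and deg: "\<forall>m\<in>Poly_Mapping.keys F. (\<Sum>i\<in>Poly_Mapping.keys m. Poly_Mapping.lookup m i) = d"
    unfolding is_form_def by blast
  have keys: "Poly_Mapping.keys (Poly_Mapping.map (of_int :: int \<Rightarrow> 'a) F) = Poly_Mapping.keys F"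
    by (rule keys_map_eq) simp
  have lin_change: "Poly_Mapping.map of_int (lin_change n A' i) = mconst (of_int D) * lin_change n A i"
    if "i \<le> n" for i
    using that by (simp add: lin_change_def map_of_int_sum map_of_int_mult map_of_int_mconst
        map_of_int_mvar A' sum_distrib_left mconst_mult mult.assoc)
  have "(Poly_Mapping.map of_int (msubst (lin_change n A') F) :: 'a mpoly) =
      msubst (\<lambda>i. Poly_Mapping.map of_int (lin_change n A' i)) (Poly_Mapping.map of_int F)"
    by (rule map_of_int_msubst)
  also have "\<dots> = mconst (of_int D ^ d) * msubst (lin_change n A) (Poly_Mapping.map of_int F)"
  proof (rule msubst_scale_homogeneous)
    fix m i
    assume "m \<in> Poly_Mapping.keys (Poly_Mapping.map (of_int :: int \<Rightarrow> 'a) F)"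
      and "i \<in> Poly_Mapping.keys m"
    then have "i \<in> mvars F"
      unfolding keys mvars_def by blast
    then show "Poly_Mapping.map of_int (lin_change n A' i) = mconst (of_int D) * lin_change n A i"
      using vars by (intro lin_change) blast
  qed (use deg keys in simp)
  finally have "mvars (Poly_Mapping.map of_int (msubst (lin_change n A') F) :: 'a mpoly) =
      mvars (msubst (lin_change n A) (Poly_Mapping.map of_int F))"
    using \<open>D \<noteq> 0\<close> by (simp add: mvars_mconst_mult)
  then show ?thesis
    by (simp only: mvars_map_of_int)
qed

lemma invertible_mat_identity: "invertible_mat n (\<lambda>i j. if i = j then 1 else (0::'a::field))"
proof -
  have "(\<Sum>j\<le>n. (if i = j then 1 else 0) * (if j = k then 1 else 0)) = (if i = k then 1 else (0::'a))"
    if "i \<le> n" for i k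
  proof -
    have "(\<Sum>j\<le>n. (if i = j then 1 else 0) * (if j = k then 1 else (0::'a))) =
        (\<Sum>j\<le>n. if j = i then (if i = k then 1 else 0) else 0)"
      by (rule sum.cong) auto
    then show ?thesis
      using that by simp
  qed
  then show ?thesis
    unfolding invertible_mat_def by (intro exI[of _ "\<lambda>i j. if i = j then 1 else 0"] allI impI conjI)
qed

lemma rat_common_denominator:
  assumes "finite S"
  shows "\<exists>D::int. D > 0 \<and> (\<forall>x\<in>S. (of_int D * x :: rat) \<in> \<int>)"
  using assms
proof (induction S rule: finite_induct)
  case empty
  show ?case by (intro exI[of _ 1]) simp
next
  case (insert x S)
  then obtain D where D: "D > 0" "\<forall>y\<in>S. (of_int D * y :: rat) \<in> \<int>" by blast
  obtain a b where q: "quotient_of x = (a, b)" by (cases "quotient_of x")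
  have "b > 0" using quotient_of_denom_pos[OF q] .
  have "of_int (D * b) * x = of_int (D * a)"
    using \<open>b > 0\<close> by (simp add: quotient_of_div[OF q])
  then have x_int: "of_int (D * b) * x \<in> \<int>"
    by (metis Ints_of_int)
  have S_int: "of_int (D * b) * y \<in> \<int>" if "y \<in> S" for y
  proof -
    have "of_int (D * b) * y = of_int b * (of_int D * y)"
      by simp
    then show ?thesis
      using D(2) that by (metis Ints_mult Ints_of_int)
  qed
  show ?case
  proof (intro exI[of _ "D * b"] conjI ballI)
    show "D * b > 0"
      using \<open>D > 0\<close> \<open>b > 0\<close> by simp
    fix y assume "y \<in> insert x S"
    then consider "y = x" | "y \<in> S"
      by blast
    then show "of_int (D * b) * y \<in> \<int>"
      using x_int S_int by cases simp_all
  qed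
qed

lemma rat_matrix_integral_multiple:
  fixes A :: "nat \<Rightarrow> nat \<Rightarrow> rat"
  obtains D :: int and A' where "D > 0" and "\<And>i j. i \<le> n \<Longrightarrow> j \<le> n \<Longrightarrow> of_int (A' i j) = of_int D * A i j"
proof -
  obtain D where "D > 0" and D: "\<forall>x\<in>(\<lambda>(i, j). A i j) ` ({..n} \<times> {..n}). of_int D * x \<in> \<int>"
    using rat_common_denominator[of "(\<lambda>(i, j). A i j) ` ({..n} \<times> {..n})"] by auto
  have "of_int \<lfloor>of_int D * A i j\<rfloor> = of_int D * A i j" if "i \<le> n" "j \<le> n" for i j
    using D that by (auto elim!: Ints_cases)
  with \<open>D > 0\<close> show thesis by (rule that)
qed

lemma of_int_sum_mult_integral_multiples:
  fixes X Y :: "nat \<Rightarrow> nat \<Rightarrow> 'a::comm_ring_1"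
  assumes X': "\<And>i j. i \<le> n \<Longrightarrow> j \<le> n \<Longrightarrow> of_int (X' i j) = of_int c * X i j"
    and Y': "\<And>i j. i \<le> n \<Longrightarrow> j \<le> n \<Longrightarrow> of_int (Y' i j) = of_int d * Y i j"
    and "i \<le> n" "k \<le> n"
  shows "of_int (\<Sum>j\<le>n. X' i j * Y' j k) = of_int (c * d) * (\<Sum>j\<le>n. X i j * Y j k)"
proof -
  have "of_int (\<Sum>j\<le>n. X' i j * Y' j k) = (\<Sum>j\<le>n. (of_int c * X i j) * (of_int d * Y j k) :: 'a)"
    using \<open>i \<le> n\<close> \<open>k \<le> n\<close> by (simp add: X' Y')
  also have "\<dots> = of_int (c * d) * (\<Sum>j\<le>n. X i j * Y j k)"
    by (simp add: sum_distrib_left ac_simps)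
  finally show ?thesis .
qed

lemma invertible_mat_mod_if_scalar_products:
  assumes AB: "\<And>i k. i \<le> n \<Longrightarrow> k \<le> n \<Longrightarrow>
      (\<Sum>j\<le>n. A i j * B j k) = c * (if i = k then 1 else 0) \<and>
      (\<Sum>j\<le>n. B i j * A j k) = c * (if i = k then 1 else 0)"
    and "coprime c p"
  shows "invertible_mat_mod p n A"
proof -
  obtain u where "[c * u = 1] (mod p)"
    using cong_solve_coprime_int[OF \<open>coprime c p\<close>] by blast
  then have u: "(c * u) mod p = 1 mod p"
    unfolding cong_def .
  show ?thesis
    unfolding invertible_mat_mod_def
  proof (intro exI[of _ "\<lambda>i j. u * B i j"] allI impI conjI)
    fix i k assume "i \<le> n" "k \<le> n"
    have "(\<Sum>j\<le>n. A i j * (u * B j k)) = u * (\<Sum>j\<le>n. A i j * B j k)"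
      by (simp add: sum_distrib_left ac_simps)
    also have "\<dots> = (c * u) * (if i = k then 1 else 0)"
      using AB[OF \<open>i \<le> n\<close> \<open>k \<le> n\<close>] by simp
    finally show "(\<Sum>j\<le>n. A i j * (u * B j k)) mod p = (if i = k then 1 else 0) mod p"
      using u by (cases "i = k") simp_all
    have "(\<Sum>j\<le>n. u * B i j * A j k) = u * (\<Sum>j\<le>n. B i j * A j k)"
      by (simp add: sum_distrib_left ac_simps)
    also have "\<dots> = (c * u) * (if i = k then 1 else 0)"
      using AB[OF \<open>i \<le> n\<close> \<open>k \<le> n\<close>] by simp
    finally show "(\<Sum>j\<le>n. u * B i j * A j k) mod p = (if i = k then 1 else 0) mod p"
      using u by (cases "i = k") simp_all
  qed
qed

lemma invertible_mat_mod_integral_multiple: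
  fixes A :: "nat \<Rightarrow> nat \<Rightarrow> rat"
  assumes "invertible_mat n A" and "D \<noteq> 0"
    and A': "\<And>i j. i \<le> n \<Longrightarrow> j \<le> n \<Longrightarrow> of_int (A' i j) = of_int D * A i j"
  obtains N where "N \<noteq> 0" and "\<And>p. coprime N p \<Longrightarrow> invertible_mat_mod p n A'"
proof -
  from assms(1) obtain B where AB: "\<forall>i\<le>n. \<forall>k\<le>n.
      (\<Sum>j\<le>n. A i j * B j k) = (if i = k then 1 else 0) \<and>
      (\<Sum>j\<le>n. B i j * A j k) = (if i = k then 1 else 0)"
    unfolding invertible_mat_def by blast
  obtain E B' where "E > 0" and B': "\<And>i j. i \<le> n \<Longrightarrow> j \<le> n \<Longrightarrow> of_int (B' i j) = of_int E * B i j"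
    using rat_matrix_integral_multiple[of n B] by blast
  have products: "(\<Sum>j\<le>n. A' i j * B' j k) = D * E * (if i = k then 1 else 0) \<and>
        (\<Sum>j\<le>n. B' i j * A' j k) = D * E * (if i = k then 1 else 0)"
    if "i \<le> n" "k \<le> n" for i k
  proof -
    have "(of_int (\<Sum>j\<le>n. A' i j * B' j k) :: rat) = of_int (D * E) * (\<Sum>j\<le>n. A i j * B j k)"
      using A' B' that by (rule of_int_sum_mult_integral_multiples)
    then have "(of_int (\<Sum>j\<le>n. A' i j * B' j k) :: rat) = of_int (D * E * (if i = k then 1 else 0))"
      using AB that by simp
    moreover have "(of_int (\<Sum>j\<le>n. B' i j * A' j k) :: rat) = of_int (E * D) * (\<Sum>j\<le>n. B i j * A j k)"
      using B' A' that by (rule of_int_sum_mult_integral_multiples)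
    then have "(of_int (\<Sum>j\<le>n. B' i j * A' j k) :: rat) = of_int (D * E * (if i = k then 1 else 0))"
      using AB that by (simp add: mult.commute)
    ultimately show ?thesis
      by (simp only: of_int_eq_iff)
  qed
  have "D * E \<noteq> 0"
    using \<open>D \<noteq> 0\<close> \<open>E > 0\<close> by simp
  moreover have "invertible_mat_mod p n A'" if "coprime (D * E) p" for p
    using products that by (rule invertible_mat_mod_if_scalar_products)
  ultimately show thesis
    by (rule that)
qed

lemma order_field_attained:
  "\<exists>A. invertible_mat n A \<and> card (mvars (msubst (lin_change n A) F)) \<le> order_field n F"
proof -
  let ?I = "\<lambda>i j. if i = j then 1 else 0 :: 'a"
  show ?thesis
    unfolding order_field_def
    by (rule LeastI[where P = "\<lambda>m. \<exists>A. invertible_mat n A \<and> card (mvars (msubst (lin_change n A) F)) \<le> m"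
          and k = "card (mvars (msubst (lin_change n ?I) F))"])
      (intro exI[of _ ?I] conjI invertible_mat_identity order_refl)
qed

lemma order_mod_le:
  "invertible_mat_mod (int p) n A \<Longrightarrow>
     order_mod p n F \<le> card (mvars (reduce_mod (int p) (msubst (lin_change n A) F)))"
  unfolding order_mod_def by (rule Least_le) blast

lemma finite_primes_violating_if_coprime:
  assumes "\<And>p. prime p \<Longrightarrow> coprime N (int p) \<Longrightarrow> P p" and "N \<noteq> 0"
  shows "finite {p :: nat. prime p \<and> \<not> P p}"
proof -
  have "{p. prime p \<and> \<not> P p} \<subseteq> int -` {d. d dvd N}"
    using assms(1) prime_imp_coprime[of "int _" N] by (auto simp: coprime_commute)
  moreover have "finite (int -` {d. d dvd N})"
    using \<open>N \<noteq> 0\<close> by (intro finite_vimageI) simp_all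
  ultimately show ?thesis
    by (rule finite_subset)
qed

theorem corollary3p10:
  fixes F :: "int mpoly" and n :: nat
  assumes "is_form n F"
    and "order_field n (Poly_Mapping.map (of_int :: int \<Rightarrow> rat) F) < n + 1"
  shows "finite {p :: nat. prime p \<and> \<not> (order_mod p n F < n + 1)}"
proof -
  obtain A :: "nat \<Rightarrow> nat \<Rightarrow> rat" where A: "invertible_mat n A"
    and "card (mvars (msubst (lin_change n A) (Poly_Mapping.map of_int F))) \<le>
           order_field n (Poly_Mapping.map (of_int :: int \<Rightarrow> rat) F)"
    using order_field_attained[of n "Poly_Mapping.map of_int F :: rat mpoly"] by blast
  with assms(2) have card_A: "card (mvars (msubst (lin_change n A) (Poly_Mapping.map of_int F))) \<le> n"
    by simp
  obtain D A' where "D > 0" and A': "\<And>i j. i \<le> n \<Longrightarrow> j \<le> n \<Longrightarrow> of_int (A' i j) = of_int D * A i j"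
    using rat_matrix_integral_multiple[of n A] by blast
  obtain N where "N \<noteq> 0" and inv: "\<And>p. coprime N p \<Longrightarrow> invertible_mat_mod p n A'"
    using invertible_mat_mod_integral_multiple[OF A _ A'] \<open>D > 0\<close> by auto
  show ?thesis
  proof (rule finite_primes_violating_if_coprime)
    fix p :: nat
    assume "coprime N (int p)"
    then have "order_mod p n F \<le> card (mvars (reduce_mod (int p) (msubst (lin_change n A') F)))"
      by (intro order_mod_le inv)
    also have "\<dots> \<le> card (mvars (msubst (lin_change n A') F))"
      by (rule card_mvars_reduce_mod_le)
    also have "\<dots> \<le> n"
      using card_A mvars_msubst_lin_change_integral_multiple[OF assms(1) _ A'] \<open>D > 0\<close> by simp
    finally show "order_mod p n F < n + 1"
      by simp
  qed fact
qed

end
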